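(* Let $N\ge 1$, let $0\le\epsilon<1/2$, and let $H_N=\sum_{k=1}^N\frac1k$. Any comparison-based quantum algorithm for sorting $N$ numbers (in the model described in the context) that errs with probability at most $\epsilon$ uses at least $$\Big(1-2\sqrt{\epsilon(1-\epsilon)}\Big)\frac{N}{2\pi}(H_N-1)$$ comparisons. In particular, every exact such algorithm uses more than $\frac{N}{2\pi}(\ln(N)-1)$ comparisons.
   Context: Sorting problem: given a list $x=(x_0,\dots,x_{N-1})$ of numbers, output a permutation $\sigma$ of $\{0,\dots,N-1\}$ such that $(x_{\sigma(0)},\dots,x_{\sigma(N-1)})$ is non-decreasing. Comparison-based quantum model: the algorithm acts on a Hilbert space with orthonormal basis $\{|z;i,i'\rangle\}$ ($z,i,i'$ non-negative integers); the input is accessible only through the comparison oracle $O_x|z;i,i'\rangle=(-1)^{m_{ii'}}|z;i,i'\rangle$, where for $0\le i,i'<N$, $m_{ii'}=1$ if $x_i<x_{i'}$ and $m_{ii'}=0$ otherwise (one application of $O_x$ is one comparison). An algorithm using $T$ comparisons is a unitary $(U O_x)^T U$ with $U$ a fixed unitary independent of $x$, applied to $|0\rangle$, followed by a measurement in the computational basis and reading of an output register. It errs with probability at most $\epsilon$ if for every input list the output is a correct sorting permutation with probability at least $1-\epsilon$; it is exact if $\epsilon=0$. *)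

theory Defs
  imports "HOL-Analysis.Analysis"
begin

text \<open>Computational basis states |z;i,i'> are labelled by triples (z,i,i') of naturals;
  states of the (infinite-dimensional) Hilbert space are square-summable amplitude functions.\<close>

type_synonym basis = "nat \<times> nat \<times> nat"
type_synonym state = "basis \<Rightarrow> complex"

definition l2 :: "state set" where
  "l2 = {\<psi>. (\<lambda>b. (cmod (\<psi> b))\<^sup>2) summable_on UNIV}"

definition sqnorm :: "state \<Rightarrow> real" where
  "sqnorm \<psi> = infsum (\<lambda>b. (cmod (\<psi> b))\<^sup>2) UNIV"

text \<open>A unitary on l2: a linear, norm-preserving bijection of l2 onto itself
  (its values outside l2 are irrelevant).\<close>
definition is_unitary :: "(state \<Rightarrow> state) \<Rightarrow> bool" where
  "is_unitary U \<longleftrightarrow>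
     U ` l2 = l2 \<and>
     (\<forall>\<psi>\<in>l2. \<forall>\<phi>\<in>l2. U (\<lambda>b. \<psi> b + \<phi> b) = (\<lambda>b. U \<psi> b + U \<phi> b)) \<and>
     (\<forall>\<psi>\<in>l2. \<forall>c. U (\<lambda>b. c * \<psi> b) = (\<lambda>b. c * U \<psi> b)) \<and>
     (\<forall>\<psi>\<in>l2. sqnorm (U \<psi>) = sqnorm \<psi>)"

definition cmp_bit :: "nat \<Rightarrow> real list \<Rightarrow> nat \<Rightarrow> nat \<Rightarrow> bool" where
  "cmp_bit N x i i' \<longleftrightarrow> i < N \<and> i' < N \<and> x ! i < x ! i'"

definition cmp_op :: "nat \<Rightarrow> real list \<Rightarrow> state \<Rightarrow> state" where
  "cmp_op N x \<psi> = (\<lambda>(z, i, i'). (if cmp_bit N x i i' then -1 else 1) * \<psi> (z, i, i'))"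

definition ket0 :: state where
  "ket0 = (\<lambda>b. if b = (0, 0, 0) then 1 else 0)"

definition final_state :: "(state \<Rightarrow> state) \<Rightarrow> nat \<Rightarrow> real list \<Rightarrow> nat \<Rightarrow> state" where
  "final_state U N x T = ((U \<circ> cmp_op N x) ^^ T) (U ket0)"

definition is_sorting_perm :: "nat \<Rightarrow> real list \<Rightarrow> (nat \<Rightarrow> nat) \<Rightarrow> bool" where
  "is_sorting_perm N x \<sigma> \<longleftrightarrow>
     bij_betw \<sigma> {..<N} {..<N} \<and> (\<forall>k. Suc k < N \<longrightarrow> x ! (\<sigma> k) \<le> x ! (\<sigma> (Suc k)))"

text \<open>Measuring in the computational basis and reading the output register:
  outcome b yields the permutation out b.\<close>
definition success_prob ::
  "(state \<Rightarrow> state) \<Rightarrow> (basis \<Rightarrow> nat \<Rightarrow> nat) \<Rightarrow> nat \<Rightarrow> real list \<Rightarrow> nat \<Rightarrow> real" where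
  "success_prob U out N x T =
     infsum (\<lambda>b. (cmod (final_state U N x T b))\<^sup>2) {b. is_sorting_perm N x (out b)}"

end

(* A weighted adversary argument. For an item j, an ordering p of the other N - 1 items and a
   rank a, let x(j,p,a) be the input in which item j has rank a and the other items are ordered
   by p. The progress measure

     W_t = sum over j, p, a, c of  Re <psi_t(x(j,p,a)), psi_t(x(j,p,c))> / |a - c|

   starts at W_0 = 2 N! N (H_N - 1). A query only changes amplitudes on which the comparison
   outcomes of the two inputs differ, i.e. where item j is compared with an item whose rank v
   separates a from c; Hilbert's inequality  sum_{a <= v < c} r_a r_c / (c - a) <= pi/2 sum_a r_a^2
   then bounds the loss per query by 4 pi N!. Inputs of different ranks have no sorting
   permutation in common, so at the end W_T <= 2 sqrt(eps (1 - eps)) W_0, whence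
   T >= (1 - 2 sqrt(eps (1 - eps))) W_0 / (4 pi N!). *)

theory Submission
  imports Defs
begin

section \<open>A Hilbert-type inequality\<close>

definition hilbert_kernel :: "real \<Rightarrow> real \<Rightarrow> real" where
  "hilbert_kernel M x = 1 / ((M + x) * sqrt x)"

definition hilbert_kernel_primitive :: "real \<Rightarrow> real \<Rightarrow> real" where
  "hilbert_kernel_primitive M x = 2 / sqrt M * arctan (sqrt x / sqrt M)"

lemma mult_midpoint_convex:
  fixes u\<^sub>p u\<^sub>q u\<^sub>c w\<^sub>p w\<^sub>q w\<^sub>c :: real
  assumes "2 * u\<^sub>c \<le> u\<^sub>p + u\<^sub>q" "2 * w\<^sub>c \<le> w\<^sub>p + w\<^sub>q" "0 \<le> u\<^sub>c" "0 \<le> w\<^sub>c"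
    and "0 \<le> (u\<^sub>p - u\<^sub>q) * (w\<^sub>p - w\<^sub>q)"
  shows "2 * (u\<^sub>c * w\<^sub>c) \<le> u\<^sub>p * w\<^sub>p + u\<^sub>q * w\<^sub>q"
proof -
  have "(2 * u\<^sub>c) * (2 * w\<^sub>c) \<le> (u\<^sub>p + u\<^sub>q) * (w\<^sub>p + w\<^sub>q)"
    using assms by (intro mult_mono) auto
  with assms(5) show ?thesis
    by (simp add: algebra_simps)
qed

lemma inverse_midpoint_convex:
  fixes M c s :: real
  assumes "0 \<le> s" "s < M + c"
  shows "2 / (M + c) \<le> 1 / (M + (c + s)) + 1 / (M + (c - s))"
proof -
  have ne: "M + (c + s) \<noteq> 0" "M + (c - s) \<noteq> 0" "M + c \<noteq> 0"
    using assms by auto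
  have "1 / (M + (c + s)) + 1 / (M + (c - s)) - 2 / (M + c)
      = 2 * s\<^sup>2 / ((M + c) * ((M + c + s) * (M + c - s)))"
    using ne by (simp add: divide_simps) (simp add: algebra_simps power2_eq_square)
  also have "\<dots> \<ge> 0"
    using assms by (intro divide_nonneg_nonneg) auto
  finally show ?thesis
    by simp
qed

lemma inverse_sqrt_midpoint_convex:
  fixes c s :: real
  assumes "0 \<le> s" "s < c"
  shows "2 / sqrt c \<le> 1 / sqrt (c + s) + 1 / sqrt (c - s)"
proof -
  define \<alpha> \<beta> where "\<alpha> = sqrt (c + s)" and "\<beta> = sqrt (c - s)"
  have pos: "\<alpha> > 0" "\<beta> > 0" "sqrt c > 0"
    using assms by (auto simp: \<alpha>_def \<beta>_def)
  have sq: "\<alpha>\<^sup>2 = c + s" "\<beta>\<^sup>2 = c - s" "(sqrt c)\<^sup>2 = c"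
    using assms by (simp_all add: \<alpha>_def \<beta>_def)
  have "(\<alpha> + \<beta>)\<^sup>2 \<le> 2 * (\<alpha>\<^sup>2 + \<beta>\<^sup>2)"
    using zero_le_power2[of "\<alpha> - \<beta>"] by (simp add: power2_eq_square algebra_simps)
  also have "\<dots> = (2 * sqrt c)\<^sup>2"
    unfolding sq power_mult_distrib by simp
  finally have sum_le: "\<alpha> + \<beta> \<le> 2 * sqrt c"
    by (rule power2_le_imp_le) (use pos in simp)
  have "4 * (\<alpha> * \<beta>) \<le> (\<alpha> + \<beta>)\<^sup>2"
    using zero_le_power2[of "\<alpha> - \<beta>"] by (simp add: power2_eq_square algebra_simps)
  then have "4 / (\<alpha> + \<beta>) \<le> 1 / \<alpha> + 1 / \<beta>"
    using pos by (simp add: field_simps power2_eq_square)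
  moreover have "2 / sqrt c \<le> 4 / (\<alpha> + \<beta>)"
    using sum_le pos by (simp add: field_simps)
  ultimately show ?thesis
    unfolding \<alpha>_def \<beta>_def by linarith
qed

lemma hilbert_kernel_midpoint_convex:
  assumes "M > 0" "0 \<le> s" "s < c"
  shows "2 * hilbert_kernel M c \<le> hilbert_kernel M (c + s) + hilbert_kernel M (c - s)"
proof -
  have "(1 / (M + (c + s)) - 1 / (M + (c - s))) * (1 / sqrt (c + s) - 1 / sqrt (c - s)) \<ge> 0"
    using assms by (intro mult_nonpos_nonpos) (auto simp: frac_le)
  then have "2 * (1 / (M + c) * (1 / sqrt c))
      \<le> 1 / (M + (c + s)) * (1 / sqrt (c + s)) + 1 / (M + (c - s)) * (1 / sqrt (c - s))"
    using assms inverse_midpoint_convex[of s M c] inverse_sqrt_midpoint_convex[of s c]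
    by (intro mult_midpoint_convex) auto
  then show ?thesis
    by (simp add: hilbert_kernel_def)
qed

lemma hilbert_kernel_primitive_has_derivative:
  assumes "M > 0" "x > 0"
  shows "(hilbert_kernel_primitive M has_real_derivative hilbert_kernel M x) (at x)"
proof -
  obtain r where r: "r > 0" "M = r\<^sup>2"
    using assms(1) by (metis real_sqrt_gt_0_iff real_sqrt_pow2 less_eq_real_def)
  have "r * (r * (r * 2)) / (r * (r * (r * (x * (sqrt x * 2)))) + r * (r * (r * (r * (r * (sqrt x * 2))))))
      = 1 / (x * sqrt x + r * (r * sqrt x))"
  proof -
    have "r * (r * (r * (x * (sqrt x * 2)))) + r * (r * (r * (r * (r * (sqrt x * 2)))))
        = (r * (r * (r * 2))) * (x * sqrt x + r * (r * sqrt x))"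
      by (simp add: algebra_simps)
    then show ?thesis
      using r by simp
  qed
  then show ?thesis
    unfolding hilbert_kernel_primitive_def [abs_def] hilbert_kernel_def r(2)
    using assms r by (auto intro!: derivative_eq_intros simp: power2_eq_square field_simps)
qed

lemma continuous_on_hilbert_kernel_primitive:
  "M > 0 \<Longrightarrow> continuous_on {0..} (hilbert_kernel_primitive M)"
  unfolding hilbert_kernel_primitive_def [abs_def] by (intro continuous_intros) auto

text \<open>The midpoint rule underestimates the integral of a convex function.\<close>

lemma hilbert_kernel_le_primitive_diff:
  assumes M: "M > 0" and h: "0 \<le> h" "h \<le> c"
  shows "2 * h * hilbert_kernel M c
    \<le> hilbert_kernel_primitive M (c + h) - hilbert_kernel_primitive M (c - h)"
proof -
  define F where "F = hilbert_kernel_primitive M"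
  define \<phi> where "\<phi> s = F (c + s) - F (c - s) - 2 * s * hilbert_kernel M c" for s
  have "\<phi> 0 \<le> \<phi> h"
  proof (rule DERIV_nonneg_imp_increasing_open[OF h(1)])
    fix s assume s: "0 < s" "s < h"
    have F': "(F has_real_derivative hilbert_kernel M y) (at y)" if "y > 0" for y
      unfolding F_def by (rule hilbert_kernel_primitive_has_derivative[OF M that])
    have "((\<lambda>s. F (c + s)) has_real_derivative hilbert_kernel M (c + s) * 1) (at s)"
      using s h by (intro DERIV_chain2[OF F'] derivative_eq_intros) auto
    moreover have "((\<lambda>s. F (c - s)) has_real_derivative hilbert_kernel M (c - s) * (0 - 1)) (at s)"
      using s h by (intro DERIV_chain2[OF F'] derivative_eq_intros) auto
    ultimately have "(\<phi> has_real_derivative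
        hilbert_kernel M (c + s) + hilbert_kernel M (c - s) - 2 * hilbert_kernel M c) (at s)"
      unfolding \<phi>_def [abs_def] by (auto intro!: derivative_eq_intros)
    moreover have "hilbert_kernel M (c + s) + hilbert_kernel M (c - s) - 2 * hilbert_kernel M c \<ge> 0"
      using hilbert_kernel_midpoint_convex[OF M, of s c] s h by simp
    ultimately show "\<exists>y. (\<phi> has_real_derivative y) (at s) \<and> 0 \<le> y"
      by blast
  next
    have "continuous_on {0..h} (\<lambda>s. F (c + s))" "continuous_on {0..h} (\<lambda>s. F (c - s))"
      using h unfolding F_def
      by (auto intro!: continuous_on_compose2[OF continuous_on_hilbert_kernel_primitive[OF M]]
          continuous_intros)
    then show "continuous_on {0..h} \<phi>"
      unfolding \<phi>_def [abs_def] by (intro continuous_intros)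
  qed
  then show ?thesis
    by (simp add: \<phi>_def F_def)
qed

lemma sum_hilbert_kernel_le_primitive:
  assumes "M > 0"
  shows "(\<Sum>n<K. hilbert_kernel M (real n + 1/2)) \<le> hilbert_kernel_primitive M (real K)"
proof (induction K)
  case 0
  show ?case
    by (simp add: hilbert_kernel_primitive_def)
next
  case (Suc K)
  have "hilbert_kernel M (real K + 1/2)
      \<le> hilbert_kernel_primitive M (real K + 1/2 + 1/2) - hilbert_kernel_primitive M (real K + 1/2 - 1/2)"
    using hilbert_kernel_le_primitive_diff[OF assms, of "1/2" "real K + 1/2"] by simp
  then show ?case
    using Suc by (simp add: algebra_simps)
qed

lemma sum_hilbert_kernel_le_pi:
  fixes f :: "'a \<Rightarrow> nat"
  assumes M: "M > 0" and A: "finite A" "inj_on f A"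
  shows "sqrt M * (\<Sum>a\<in>A. hilbert_kernel M (real (f a) + 1/2)) \<le> pi"
proof -
  define n\<^sub>0 where "n\<^sub>0 = Suc (Max (f ` A))"
  have "(\<Sum>a\<in>A. hilbert_kernel M (real (f a) + 1/2)) = (\<Sum>n\<in>f ` A. hilbert_kernel M (real n + 1/2))"
    using A by (simp add: sum.reindex)
  also have "\<dots> \<le> (\<Sum>n<n\<^sub>0. hilbert_kernel M (real n + 1/2))"
    using A M by (intro sum_mono2) (auto simp: n\<^sub>0_def le_imp_less_Suc hilbert_kernel_def)
  also have "\<dots> \<le> hilbert_kernel_primitive M (real n\<^sub>0)"
    by (rule sum_hilbert_kernel_le_primitive[OF M])
  finally have "sqrt M * (\<Sum>a\<in>A. hilbert_kernel M (real (f a) + 1/2))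
      \<le> sqrt M * hilbert_kernel_primitive M (real n\<^sub>0)"
    using M by (intro mult_left_mono) auto
  also have "\<dots> = 2 * arctan (sqrt (real n\<^sub>0) / sqrt M)"
    using M by (simp add: hilbert_kernel_primitive_def)
  also have "\<dots> \<le> pi"
    using arctan_ubound[of "sqrt (real n\<^sub>0) / sqrt M"] by simp
  finally show ?thesis .
qed

lemma mult_le_weighted_sum_squares:
  fixes x y t :: real
  assumes "t > 0"
  shows "x * y \<le> (t * x\<^sup>2 + y\<^sup>2 / t) / 2"
proof -
  have "0 \<le> (t * x - y)\<^sup>2"
    by simp
  then have "2 * t * (x * y) \<le> t * (t * x\<^sup>2) + y\<^sup>2"
    by (simp add: power2_diff power_mult_distrib power2_eq_square algebra_simps)
  then show ?thesis
    using assms by (simp add: field_simps power2_eq_square)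
qed

lemma schur_test:
  fixes r :: "nat \<Rightarrow> real" and K A B :: "nat \<Rightarrow> nat \<Rightarrow> real"
  assumes K: "\<And>a c. K a c \<le> ((r a)\<^sup>2 * A a c + (r c)\<^sup>2 * B a c) / 2"
    and A: "\<And>a. (\<Sum>c<N. A a c) \<le> \<alpha> a" and B: "\<And>c. (\<Sum>a<N. B a c) \<le> \<beta> c"
  shows "(\<Sum>a<N. \<Sum>c<N. K a c) \<le> (\<Sum>a<N. (r a)\<^sup>2 * (\<alpha> a + \<beta> a)) / 2"
proof -
  have "(\<Sum>a<N. \<Sum>c<N. K a c) \<le> (\<Sum>a<N. \<Sum>c<N. ((r a)\<^sup>2 * A a c + (r c)\<^sup>2 * B a c) / 2)"
    by (intro sum_mono K)
  also have "\<dots> = ((\<Sum>a<N. (r a)\<^sup>2 * (\<Sum>c<N. A a c)) + (\<Sum>c<N. (r c)\<^sup>2 * (\<Sum>a<N. B a c))) / 2"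
  proof -
    have "(\<Sum>a<N. \<Sum>c<N. (r c)\<^sup>2 * B a c) = (\<Sum>c<N. \<Sum>a<N. (r c)\<^sup>2 * B a c)"
      by (rule sum.swap)
    then show ?thesis
      by (simp add: sum.distrib sum_divide_distrib [symmetric] sum_distrib_left)
  qed
  also have "\<dots> \<le> ((\<Sum>a<N. (r a)\<^sup>2 * \<alpha> a) + (\<Sum>c<N. (r c)\<^sup>2 * \<beta> c)) / 2"
    using A B by (intro divide_right_mono add_mono sum_mono mult_left_mono) auto
  finally show ?thesis
    by (simp add: sum.distrib distrib_left)
qed

lemma mult_divide_le_hilbert_kernel:
  fixes x y L R :: real
  assumes "L > 0" "R > 0"
  shows "x * y / (L + R)
    \<le> (x\<^sup>2 * (sqrt L * hilbert_kernel L R) + y\<^sup>2 * (sqrt R * hilbert_kernel R L)) / 2"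
proof -
  define t where "t = sqrt L / sqrt R"
  have t: "t > 0"
    using assms by (simp add: t_def)
  have "x * y / (L + R) \<le> (t * x\<^sup>2 + y\<^sup>2 / t) / 2 / (L + R)"
    using assms by (intro divide_right_mono mult_le_weighted_sum_squares t) simp
  also have "\<dots> = (x\<^sup>2 * (t / (L + R)) + y\<^sup>2 * (1 / t / (L + R))) / 2"
    by (simp add: add_divide_distrib ac_simps)
  also have "t / (L + R) = sqrt L * hilbert_kernel L R"
    using assms by (simp add: t_def hilbert_kernel_def field_simps)
  also have "1 / t / (L + R) = sqrt R * hilbert_kernel R L"
    using assms by (simp add: t_def hilbert_kernel_def field_simps)
  finally show ?thesis .
qed

lemma sum_hilbert_kernel_shifted_le_pi:
  fixes v N :: nat
  assumes "M > 0"
  shows "sqrt M * (\<Sum>c | c < N \<and> v < c. hilbert_kernel M (real c - real v - 1/2)) \<le> pi"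
    and "sqrt M * (\<Sum>a | a < N \<and> a \<le> v. hilbert_kernel M (real v - real a + 1/2)) \<le> pi"
proof -
  have "(\<Sum>c | c < N \<and> v < c. hilbert_kernel M (real c - real v - 1/2))
      = (\<Sum>c | c < N \<and> v < c. hilbert_kernel M (real (c - Suc v) + 1/2))"
    by (intro sum.cong) (auto simp: of_nat_diff)
  also have "sqrt M * \<dots> \<le> pi"
    using assms by (intro sum_hilbert_kernel_le_pi) (auto simp: inj_on_def)
  finally show "sqrt M * (\<Sum>c | c < N \<and> v < c. hilbert_kernel M (real c - real v - 1/2)) \<le> pi" .
  have "(\<Sum>a | a < N \<and> a \<le> v. hilbert_kernel M (real v - real a + 1/2))
      = (\<Sum>a | a < N \<and> a \<le> v. hilbert_kernel M (real (v - a) + 1/2))"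
    by (intro sum.cong) (auto simp: of_nat_diff)
  also have "sqrt M * \<dots> \<le> pi"
    using assms by (intro sum_hilbert_kernel_le_pi) (auto simp: inj_on_def)
  finally show "sqrt M * (\<Sum>a | a < N \<and> a \<le> v. hilbert_kernel M (real v - real a + 1/2)) \<le> pi" .
qed

text \<open>Schur's test with the weights \<open>\<surd>(v - a + 1/2)\<close> and \<open>\<surd>(c - v - 1/2)\<close>: every row and column
  sum of the resulting kernels is a midpoint sum for \<open>\<integral>\<^sub>0\<^sup>\<infinity> \<surd>M / ((M + x) \<surd>x) dx = \<pi>\<close>.\<close>

lemma hilbert_inequality_one_sided:
  fixes r :: "nat \<Rightarrow> real"
  shows "(\<Sum>a<N. \<Sum>c<N. if a \<le> v \<and> v < c then r a * r c / (real c - real a) else 0)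
           \<le> pi / 2 * (\<Sum>a<N. (r a)\<^sup>2)"
proof -
  define L where "L a = real v - real a + 1/2" for a
  define R where "R c = real c - real v - 1/2" for c
  define A where "A a c = (if a \<le> v \<and> v < c then sqrt (L a) * hilbert_kernel (L a) (R c) else 0)" for a c
  define B where "B a c = (if a \<le> v \<and> v < c then sqrt (R c) * hilbert_kernel (R c) (L a) else 0)" for a c
  have "(\<Sum>a<N. \<Sum>c<N. if a \<le> v \<and> v < c then r a * r c / (real c - real a) else 0)
      \<le> (\<Sum>a<N. (r a)\<^sup>2 * ((if a \<le> v then pi else 0) + (if v < a then pi else 0))) / 2"
  proof (rule schur_test)
    show "(if a \<le> v \<and> v < c then r a * r c / (real c - real a) else 0)
        \<le> ((r a)\<^sup>2 * A a c + (r c)\<^sup>2 * B a c) / 2" for a c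
      using mult_divide_le_hilbert_kernel[of "L a" "R c" "r a" "r c"]
      by (auto simp: A_def B_def L_def R_def)
    show "(\<Sum>c<N. A a c) \<le> (if a \<le> v then pi else 0)" for a
      using sum_hilbert_kernel_shifted_le_pi(1)[of "L a" v N]
      by (auto simp: A_def L_def R_def sum.inter_filter [symmetric] sum_distrib_left)
    show "(\<Sum>a<N. B a c) \<le> (if v < c then pi else 0)" for c
      using sum_hilbert_kernel_shifted_le_pi(2)[of "R c" v N]
      by (auto simp: B_def L_def R_def sum.inter_filter [symmetric] sum_distrib_left)
  qed
  also have "\<dots> = pi / 2 * (\<Sum>a<N. (r a)\<^sup>2)"
  proof -
    have "(if a \<le> v then pi else 0) + (if v < a then pi else 0) = pi" for a
      by auto
    then show ?thesis
      by (simp add: sum_distrib_left ac_simps)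
  qed
  finally show ?thesis .
qed

lemma hilbert_inequality_split:
  fixes r :: "nat \<Rightarrow> real"
  shows "(\<Sum>a<N. \<Sum>c<N. if (a \<le> v) \<noteq> (c \<le> v) then r a * r c / \<bar>real a - real c\<bar> else 0)
           \<le> pi * (\<Sum>a<N. (r a)\<^sup>2)"
proof -
  have split: "(if (a \<le> v) \<noteq> (c \<le> v) then r a * r c / \<bar>real a - real c\<bar> else 0)
     = (if a \<le> v \<and> v < c then r a * r c / (real c - real a) else 0)
     + (if c \<le> v \<and> v < a then r c * r a / (real a - real c) else 0)" for a c
    by (auto simp: abs_if mult.commute)
  have "(\<Sum>a<N. \<Sum>c<N. if (a \<le> v) \<noteq> (c \<le> v) then r a * r c / \<bar>real a - real c\<bar> else 0)
     = (\<Sum>a<N. \<Sum>c<N. if a \<le> v \<and> v < c then r a * r c / (real c - real a) else 0)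
     + (\<Sum>c<N. \<Sum>a<N. if c \<le> v \<and> v < a then r c * r a / (real a - real c) else 0)"
    by (simp only: split sum.distrib sum.swap [of "\<lambda>a c. if c \<le> v \<and> v < a then r c * r a / (real a - real c) else 0"])
  also have "\<dots> \<le> pi / 2 * (\<Sum>a<N. (r a)\<^sup>2) + pi / 2 * (\<Sum>a<N. (r a)\<^sup>2)"
    by (intro add_mono hilbert_inequality_one_sided)
  finally show ?thesis
    by simp
qed

section \<open>Square-summable states\<close>

lemma infsum_diff:
  fixes f g :: "'a \<Rightarrow> 'b::{topological_ab_group_add, t2_space}"
  assumes "f summable_on A" "g summable_on A"
  shows "infsum (\<lambda>x. f x - g x) A = infsum f A - infsum g A"
  using infsum_add[OF assms(1), of "\<lambda>x. - g x"] assms(2)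
  by (simp add: summable_on_uminus infsum_uminus)

lemma summable_on_diff:
  fixes f g :: "'a \<Rightarrow> 'b::topological_ab_group_add"
  assumes "f summable_on A" "g summable_on A"
  shows "(\<lambda>x. f x - g x) summable_on A"
  using summable_on_add[OF assms(1), of "\<lambda>x. - g x"] assms(2) by (simp add: summable_on_uminus)

lemma has_sum_sum:
  fixes f :: "'i \<Rightarrow> 'a \<Rightarrow> 'b::topological_comm_monoid_add"
  assumes "finite I" "\<And>i. i \<in> I \<Longrightarrow> (f i has_sum s i) A"
  shows "((\<lambda>x. \<Sum>i\<in>I. f i x) has_sum (\<Sum>i\<in>I. s i)) A"
  using assms
proof (induction I rule: finite_induct)
  case (insert i I)
  have "(f i has_sum s i) A" "((\<lambda>x. \<Sum>i\<in>I. f i x) has_sum (\<Sum>i\<in>I. s i)) A"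
    using insert by simp_all
  then have "((\<lambda>x. f i x + (\<Sum>i\<in>I. f i x)) has_sum (s i + (\<Sum>i\<in>I. s i))) A"
    by (rule has_sum_add)
  then show ?case
    using insert.hyps by simp
qed simp

definition outcome_prob :: "state \<Rightarrow> basis set \<Rightarrow> real" where
  "outcome_prob \<psi> A = infsum (\<lambda>b. (cmod (\<psi> b))\<^sup>2) A"

lemma summable_on_cmod_sq: "\<psi> \<in> l2 \<Longrightarrow> (\<lambda>b. (cmod (\<psi> b))\<^sup>2) summable_on A"
  unfolding l2_def by (auto intro: summable_on_subset_banach)

lemma has_sum_sqnorm: "\<psi> \<in> l2 \<Longrightarrow> ((\<lambda>b. (cmod (\<psi> b))\<^sup>2) has_sum sqnorm \<psi>) UNIV"
  unfolding sqnorm_def by (rule has_sum_infsum) (rule summable_on_cmod_sq)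

lemma outcome_prob_Compl:
  assumes "\<psi> \<in> l2" "sqnorm \<psi> = 1"
  shows "outcome_prob \<psi> (- A) = 1 - outcome_prob \<psi> A"
  using infsum_Un_disjoint[OF summable_on_cmod_sq[OF assms(1)] summable_on_cmod_sq[OF assms(1)], of A "- A"] assms(2)
  by (simp add: outcome_prob_def sqnorm_def)

lemma outcome_prob_mono:
  assumes "\<psi> \<in> l2" "A \<subseteq> B"
  shows "outcome_prob \<psi> A \<le> outcome_prob \<psi> B"
  unfolding outcome_prob_def
  by (rule infsum_mono_neutral) (use assms in \<open>auto intro: summable_on_cmod_sq\<close>)

lemma l2_add:
  assumes "\<psi> \<in> l2" "\<phi> \<in> l2"
  shows "(\<lambda>b. \<psi> b + \<phi> b) \<in> l2"
proof -
  have "(cmod (\<psi> b + \<phi> b))\<^sup>2 \<le> 2 * (cmod (\<psi> b))\<^sup>2 + 2 * (cmod (\<phi> b))\<^sup>2" for b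
  proof -
    have "(cmod (\<psi> b + \<phi> b))\<^sup>2 \<le> (cmod (\<psi> b) + cmod (\<phi> b))\<^sup>2"
      by (simp add: norm_triangle_ineq power_mono)
    also have "\<dots> \<le> 2 * (cmod (\<psi> b))\<^sup>2 + 2 * (cmod (\<phi> b))\<^sup>2"
      using zero_le_power2[of "cmod (\<psi> b) - cmod (\<phi> b)"] by (simp add: power2_eq_square algebra_simps)
    finally show ?thesis .
  qed
  moreover have "(\<lambda>b. 2 * (cmod (\<psi> b))\<^sup>2 + 2 * (cmod (\<phi> b))\<^sup>2) summable_on UNIV"
    using assms by (intro summable_on_add summable_on_cmult_right summable_on_cmod_sq)
  ultimately show ?thesis
    unfolding l2_def mem_Collect_eq by (rule_tac summable_on_comparison_test) auto
qed

lemma summable_on_cmod_mult: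
  assumes "\<psi> \<in> l2" "\<phi> \<in> l2"
  shows "(\<lambda>b. cmod (\<psi> b) * cmod (\<phi> b)) summable_on A"
proof (rule summable_on_comparison_test)
  show "(\<lambda>b. 1/2 * ((cmod (\<psi> b))\<^sup>2 + (cmod (\<phi> b))\<^sup>2)) summable_on A"
    by (intro summable_on_cmult_right summable_on_add summable_on_cmod_sq assms)
  show "cmod (\<psi> b) * cmod (\<phi> b) \<le> 1/2 * ((cmod (\<psi> b))\<^sup>2 + (cmod (\<phi> b))\<^sup>2)" for b
    using mult_le_weighted_sum_squares[of 1] by simp
qed simp

lemma infsum_cmod_mult_le:
  assumes "\<psi> \<in> l2" "\<phi> \<in> l2" "t > 0"
  shows "infsum (\<lambda>b. cmod (\<psi> b) * cmod (\<phi> b)) A \<le> (t * outcome_prob \<psi> A + outcome_prob \<phi> A / t) / 2"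
proof -
  have sq: "(\<lambda>b. (cmod (\<psi> b))\<^sup>2) summable_on A" "(\<lambda>b. (cmod (\<phi> b))\<^sup>2) summable_on A"
    using assms by (simp_all add: summable_on_cmod_sq)
  have "infsum (\<lambda>b. cmod (\<psi> b) * cmod (\<phi> b)) A
      \<le> infsum (\<lambda>b. t / 2 * (cmod (\<psi> b))\<^sup>2 + 1 / (2 * t) * (cmod (\<phi> b))\<^sup>2) A"
  proof (rule infsum_mono)
    show "cmod (\<psi> b) * cmod (\<phi> b) \<le> t / 2 * (cmod (\<psi> b))\<^sup>2 + 1 / (2 * t) * (cmod (\<phi> b))\<^sup>2" for b
      using mult_le_weighted_sum_squares[OF assms(3), of "cmod (\<psi> b)" "cmod (\<phi> b)"]
      by (simp add: add_divide_distrib)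
  qed (intro summable_on_cmod_mult summable_on_add summable_on_cmult_right sq assms)+
  also have "\<dots> = t / 2 * outcome_prob \<psi> A + 1 / (2 * t) * outcome_prob \<phi> A"
    unfolding outcome_prob_def
    by (simp only: infsum_add[OF summable_on_cmult_right[OF sq(1)] summable_on_cmult_right[OF sq(2)]]
        infsum_cmult_right')
  also have "\<dots> = (t * outcome_prob \<psi> A + outcome_prob \<phi> A / t) / 2"
    by (simp add: add_divide_distrib)
  finally show ?thesis .
qed

definition inner_re :: "state \<Rightarrow> state \<Rightarrow> real" where
  "inner_re \<psi> \<phi> = infsum (\<lambda>b. Re (cnj (\<psi> b) * \<phi> b)) UNIV"

lemma abs_Re_cnj_mult_le: "\<bar>Re (cnj a * b)\<bar> \<le> cmod a * cmod b"
  using abs_Re_le_cmod[of "cnj a * b"] by (simp add: norm_mult)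

lemma summable_on_Re_cnj_mult:
  assumes "\<psi> \<in> l2" "\<phi> \<in> l2"
  shows "(\<lambda>b. Re (cnj (\<psi> b) * \<phi> b)) summable_on UNIV"
proof -
  have "(\<lambda>b. norm (Re (cnj (\<psi> b) * \<phi> b))) summable_on UNIV"
    by (rule summable_on_comparison_test[OF summable_on_cmod_mult[OF assms]])
       (use abs_Re_cnj_mult_le in auto)
  then show ?thesis
    using summable_on_iff_abs_summable_on_real by blast
qed

lemma inner_re_le_infsum_cmod_mult:
  assumes "\<psi> \<in> l2" "\<phi> \<in> l2"
  shows "inner_re \<psi> \<phi> \<le> infsum (\<lambda>b. cmod (\<psi> b) * cmod (\<phi> b)) UNIV"
  unfolding inner_re_def
  by (rule infsum_mono[OF summable_on_Re_cnj_mult[OF assms] summable_on_cmod_mult[OF assms]])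
     (use abs_Re_cnj_mult_le in \<open>auto simp: abs_le_iff\<close>)

lemma inner_re_self: "inner_re \<psi> \<psi> = sqnorm \<psi>"
proof -
  have "Re (cnj z * z) = (cmod z)\<^sup>2" for z
    by (metis Re_complex_of_real complex_norm_square mult.commute)
  then show ?thesis
    by (simp only: inner_re_def sqnorm_def)
qed

lemma sqnorm_add:
  assumes "\<psi> \<in> l2" "\<phi> \<in> l2"
  shows "sqnorm (\<lambda>b. \<psi> b + \<phi> b) = sqnorm \<psi> + sqnorm \<phi> + 2 * inner_re \<psi> \<phi>"
proof -
  have expand: "(cmod (a + c))\<^sup>2 = (cmod a)\<^sup>2 + (cmod c)\<^sup>2 + 2 * Re (cnj a * c)" for a c
    by (simp add: cmod_power2 power2_sum algebra_simps)
  have sq: "(\<lambda>b. (cmod (\<psi> b))\<^sup>2) summable_on UNIV" "(\<lambda>b. (cmod (\<phi> b))\<^sup>2) summable_on UNIV"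
    using assms by (simp_all add: summable_on_cmod_sq)
  show ?thesis
    unfolding sqnorm_def inner_re_def expand
    by (simp only: infsum_add summable_on_add summable_on_cmult_right sq
        summable_on_Re_cnj_mult[OF assms] infsum_cmult_right')
qed

lemma unitary_l2: "is_unitary U \<Longrightarrow> \<psi> \<in> l2 \<Longrightarrow> U \<psi> \<in> l2"
  unfolding is_unitary_def by blast

lemma unitary_sqnorm: "is_unitary U \<Longrightarrow> \<psi> \<in> l2 \<Longrightarrow> sqnorm (U \<psi>) = sqnorm \<psi>"
  unfolding is_unitary_def by blast

text \<open>Polarization: a norm-preserving additive map preserves the real part of the inner product.\<close>

lemma unitary_inner_re:
  assumes U: "is_unitary U" and \<psi>: "\<psi> \<in> l2" and \<phi>: "\<phi> \<in> l2"
  shows "inner_re (U \<psi>) (U \<phi>) = inner_re \<psi> \<phi>"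
proof -
  have "U (\<lambda>b. \<psi> b + \<phi> b) = (\<lambda>b. U \<psi> b + U \<phi> b)"
    using U \<psi> \<phi> unfolding is_unitary_def by blast
  then have "sqnorm (\<lambda>b. U \<psi> b + U \<phi> b) = sqnorm (\<lambda>b. \<psi> b + \<phi> b)"
    using unitary_sqnorm[OF U l2_add[OF \<psi> \<phi>]] by simp
  then have "sqnorm (U \<psi>) + sqnorm (U \<phi>) + 2 * inner_re (U \<psi>) (U \<phi>)
      = sqnorm \<psi> + sqnorm \<phi> + 2 * inner_re \<psi> \<phi>"
    by (simp only: sqnorm_add unitary_l2 U \<psi> \<phi>)
  then show ?thesis
    using unitary_sqnorm[OF U \<psi>] unitary_sqnorm[OF U \<phi>] by simp
qed

section \<open>Comparison queries\<close>

lemma cmod_cmp_op [simp]: "cmod (cmp_op N x \<psi> b) = cmod (\<psi> b)"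
  by (cases b) (auto simp: cmp_op_def norm_mult)

lemma cmp_op_l2: "\<psi> \<in> l2 \<Longrightarrow> cmp_op N x \<psi> \<in> l2"
  by (simp add: l2_def)

lemma sqnorm_cmp_op [simp]: "sqnorm (cmp_op N x \<psi>) = sqnorm \<psi>"
  by (simp add: sqnorm_def)

lemma ket0_l2: "ket0 \<in> l2" and sqnorm_ket0: "sqnorm ket0 = 1"
proof -
  have "((\<lambda>b. (cmod (ket0 b))\<^sup>2) has_sum 1) UNIV"
    by (rule has_sum_finite_neutralI[of "{(0, 0, 0)}"]) (auto simp: ket0_def)
  then show "ket0 \<in> l2" "sqnorm ket0 = 1"
    unfolding l2_def sqnorm_def by (auto simp: summable_on_def infsumI)
qed

lemma final_state_Suc: "final_state U N x (Suc t) = U (cmp_op N x (final_state U N x t))"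
  by (simp add: final_state_def)

lemma final_state_l2: "is_unitary U \<Longrightarrow> final_state U N x t \<in> l2"
  by (induction t) (simp_all add: final_state_def [of _ _ _ 0] ket0_l2 unitary_l2 final_state_Suc cmp_op_l2)

lemma sqnorm_final_state: "is_unitary U \<Longrightarrow> sqnorm (final_state U N x t) = 1"
  by (induction t)
     (simp_all add: final_state_def [of _ _ _ 0] ket0_l2 sqnorm_ket0 unitary_sqnorm final_state_Suc
       cmp_op_l2 final_state_l2)

definition cmp_differ :: "nat \<Rightarrow> real list \<Rightarrow> real list \<Rightarrow> basis \<Rightarrow> bool" where
  "cmp_differ N x y = (\<lambda>(z, i, i'). cmp_bit N x i i' \<noteq> cmp_bit N y i i')"

text \<open>The two oracles multiply each amplitude by signs that agree except where the comparison
  outcomes differ.\<close>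

lemma inner_re_diff_cmp_op_le:
  assumes \<psi>: "\<psi> \<in> l2" and \<phi>: "\<phi> \<in> l2"
  shows "inner_re \<psi> \<phi> - inner_re (cmp_op N x \<psi>) (cmp_op N y \<phi>)
     \<le> 2 * infsum (\<lambda>b. if cmp_differ N x y b then cmod (\<psi> b) * cmod (\<phi> b) else 0) UNIV"
proof -
  define D where "D = (\<lambda>b. if cmp_differ N x y b then cmod (\<psi> b) * cmod (\<phi> b) else 0)"
  have D: "D summable_on UNIV"
    unfolding D_def by (rule summable_on_comparison_test[OF summable_on_cmod_mult[OF \<psi> \<phi>]]) auto
  have pointwise: "Re (cnj (\<psi> b) * \<phi> b) - Re (cnj (cmp_op N x \<psi> b) * cmp_op N y \<phi> b) \<le> 2 * D b" for b
  proof -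
    obtain z i i' where b: "b = (z, i, i')"
      by (cases b)
    define r where "r = Re (cnj (\<psi> b) * \<phi> b)"
    have "Re (cnj (cmp_op N x \<psi> b) * cmp_op N y \<phi> b) = (if cmp_differ N x y b then - r else r)"
      by (simp add: b r_def cmp_op_def cmp_differ_def)
    moreover have "\<bar>r\<bar> \<le> cmod (\<psi> b) * cmod (\<phi> b)"
      unfolding r_def by (rule abs_Re_cnj_mult_le)
    ultimately show ?thesis
      unfolding r_def [symmetric] D_def by auto
  qed
  have "inner_re \<psi> \<phi> - inner_re (cmp_op N x \<psi>) (cmp_op N y \<phi>)
     = infsum (\<lambda>b. Re (cnj (\<psi> b) * \<phi> b) - Re (cnj (cmp_op N x \<psi> b) * cmp_op N y \<phi> b)) UNIV"
    unfolding inner_re_def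
    by (rule infsum_diff [symmetric]) (intro summable_on_Re_cnj_mult cmp_op_l2 \<psi> \<phi>)+
  also have "\<dots> \<le> infsum (\<lambda>b. 2 * D b) UNIV"
    by (intro infsum_mono pointwise summable_on_diff summable_on_Re_cnj_mult cmp_op_l2
        summable_on_cmult_right D \<psi> \<phi>)
  also have "\<dots> = 2 * infsum D UNIV"
    by (rule infsum_cmult_right')
  finally show ?thesis
    by (simp add: D_def)
qed

text \<open>AM-GM on \<open>|\<psi> b| |\<phi> b|\<close> with weight \<open>s\<close> on \<open>A\<close> and \<open>1/s\<close> off \<open>A\<close>.\<close>

lemma inner_re_le_of_disjoint_outcomes_param:
  assumes \<psi>: "\<psi> \<in> l2" "sqnorm \<psi> = 1" and \<phi>: "\<phi> \<in> l2" "sqnorm \<phi> = 1"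
    and disj: "A \<inter> B = {}"
    and A: "outcome_prob \<psi> A \<ge> 1 - eps" and B: "outcome_prob \<phi> B \<ge> 1 - eps"
    and eps: "eps \<le> 1/2" and s: "0 < s" "s \<le> 1"
  shows "inner_re \<psi> \<phi> \<le> s * (1 - eps) + eps / s"
proof -
  define \<alpha> \<beta> where "\<alpha> = outcome_prob \<psi> A" and "\<beta> = outcome_prob \<phi> A"
  have \<beta>: "\<beta> \<le> eps"
  proof -
    have "\<beta> \<le> outcome_prob \<phi> (- B)"
      unfolding \<beta>_def using disj by (intro outcome_prob_mono \<phi>) auto
    also have "\<dots> = 1 - outcome_prob \<phi> B"
      by (rule outcome_prob_Compl[OF \<phi>])
    finally show ?thesis
      using B by simp
  qed
  have u: "1 / s > 0" "s \<le> 1 / s"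
    using s by (simp_all add: field_simps mult_le_one)
  have cmod_mult: "(\<lambda>b. cmod (\<psi> b) * cmod (\<phi> b)) summable_on C" for C
    by (rule summable_on_cmod_mult[OF \<psi>(1) \<phi>(1)])
  have "inner_re \<psi> \<phi> \<le> infsum (\<lambda>b. cmod (\<psi> b) * cmod (\<phi> b)) (A \<union> - A)"
    using inner_re_le_infsum_cmod_mult[OF \<psi>(1) \<phi>(1)] by simp
  also have "\<dots> = infsum (\<lambda>b. cmod (\<psi> b) * cmod (\<phi> b)) A + infsum (\<lambda>b. cmod (\<psi> b) * cmod (\<phi> b)) (- A)"
    by (rule infsum_Un_disjoint[OF cmod_mult cmod_mult]) auto
  also have "\<dots> \<le> (s * \<alpha> + \<beta> / s) / 2 + (1 / s * (1 - \<alpha>) + (1 - \<beta>) / (1 / s)) / 2"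
  proof (rule add_mono)
    show "infsum (\<lambda>b. cmod (\<psi> b) * cmod (\<phi> b)) A \<le> (s * \<alpha> + \<beta> / s) / 2"
      unfolding \<alpha>_def \<beta>_def by (rule infsum_cmod_mult_le[OF \<psi>(1) \<phi>(1) s(1)])
    show "infsum (\<lambda>b. cmod (\<psi> b) * cmod (\<phi> b)) (- A) \<le> (1 / s * (1 - \<alpha>) + (1 - \<beta>) / (1 / s)) / 2"
      using infsum_cmod_mult_le[OF \<psi>(1) \<phi>(1) u(1), of "- A"]
      unfolding \<alpha>_def \<beta>_def outcome_prob_Compl[OF \<psi>] outcome_prob_Compl[OF \<phi>] .
  qed
  also have "\<dots> = (s + 1 / s - (\<alpha> - \<beta>) * (1 / s - s)) / 2"
    using s by (simp add: field_simps)
  also have "\<dots> \<le> (s + 1 / s - (1 - 2 * eps) * (1 / s - s)) / 2"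
    using A \<beta> u(2) unfolding \<alpha>_def by (intro divide_right_mono diff_left_mono mult_right_mono) auto
  also have "\<dots> = s * (1 - eps) + eps / s"
    using s by (simp add: field_simps)
  finally show ?thesis .
qed

lemma inner_re_le_of_disjoint_outcomes:
  assumes \<psi>: "\<psi> \<in> l2" "sqnorm \<psi> = 1" and \<phi>: "\<phi> \<in> l2" "sqnorm \<phi> = 1"
    and disj: "A \<inter> B = {}"
    and A: "outcome_prob \<psi> A \<ge> 1 - eps" and B: "outcome_prob \<phi> B \<ge> 1 - eps"
    and eps: "0 \<le> eps" "eps \<le> 1/2"
  shows "inner_re \<psi> \<phi> \<le> 2 * sqrt (eps * (1 - eps))"
proof (cases "eps = 0")
  case True
  have "inner_re \<psi> \<phi> \<le> 0 + e" if "e > 0" for e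
  proof -
    have "inner_re \<psi> \<phi> \<le> min e 1"
      using inner_re_le_of_disjoint_outcomes_param[OF \<psi> \<phi> disj A B eps(2), of "min e 1"] that True
      by simp
    then show ?thesis
      by simp
  qed
  then show ?thesis
    using True by (simp add: field_le_epsilon)
next
  case False
  then have pos: "sqrt eps > 0" "sqrt (1 - eps) > 0"
    using eps by auto
  define s where "s = sqrt eps / sqrt (1 - eps)"
  have "sqrt eps \<le> sqrt (1 - eps)"
    using eps by simp
  then have s: "0 < s" "s \<le> 1"
    using pos by (simp_all add: s_def)
  have sq: "sqrt eps * sqrt eps = eps" "sqrt (1 - eps) * sqrt (1 - eps) = 1 - eps"
    using eps by simp_all
  have "s * (1 - eps) = sqrt eps * sqrt (1 - eps)"
    using sq pos by (simp add: s_def field_simps)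
  moreover have "eps / s = sqrt eps * sqrt (1 - eps)"
    using sq pos by (simp add: s_def field_simps)
  ultimately show ?thesis
    using inner_re_le_of_disjoint_outcomes_param[OF \<psi> \<phi> disj A B eps(2) s]
    by (simp add: real_sqrt_mult)
qed

section \<open>The hard inputs\<close>

definition perm_list :: "nat \<Rightarrow> (nat \<Rightarrow> nat) \<Rightarrow> real list" where
  "perm_list N s = map (\<lambda>k. real (s k)) [0..<N]"

definition perm_inputs :: "nat \<Rightarrow> real list set" where
  "perm_inputs N = perm_list N ` {s. s permutes {..<N}}"

lemma length_perm_list [simp]: "length (perm_list N s) = N"
  by (simp add: perm_list_def)

lemma nth_perm_list [simp]: "k < N \<Longrightarrow> perm_list N s ! k = real (s k)"
  by (simp add: perm_list_def)

lemma finite_perm_inputs: "finite (perm_inputs N)"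
  unfolding perm_inputs_def by (intro finite_imageI finite_permutations) simp

lemma card_perm_inputs_le: "card (perm_inputs N) \<le> fact N"
proof -
  have "card (perm_inputs N) \<le> card {s. s permutes {..<N}}"
    unfolding perm_inputs_def by (intro card_image_le finite_permutations) simp
  also have "\<dots> = fact N"
    by (simp add: card_permutations)
  finally show ?thesis .
qed

lemma perm_list_in_perm_inputs:
  assumes "bij_betw s {..<N} {..<N}"
  shows "perm_list N s \<in> perm_inputs N"
proof -
  define s' where "s' k = (if k < N then s k else k)" for k
  have "bij_betw s' {..<N} {..<N}"
    using assms by (rule bij_betw_cong [THEN iffD1, rotated]) (simp add: s'_def)
  then have "s' permutes {..<N}"
    by (rule bij_imp_permutes) (simp add: s'_def)
  moreover have "perm_list N s = perm_list N s'"
    by (simp add: perm_list_def s'_def)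
  ultimately show ?thesis
    unfolding perm_inputs_def by blast
qed

lemma sorting_perm_of_perm_list:
  assumes s: "bij_betw s {..<N} {..<N}" and t: "is_sorting_perm N (perm_list N s) t" and k: "k < N"
  shows "s (t k) = k"
proof -
  have t_bij: "bij_betw t {..<N} {..<N}"
    using t by (simp add: is_sorting_perm_def)
  have st_bij: "bij_betw (\<lambda>k. s (t k)) {..<N} {..<N}"
    using bij_betw_trans[OF t_bij s] by (simp add: comp_def)
  define L where "L = map (\<lambda>k. s (t k)) [0..<N]"
  have "sorted L"
    unfolding sorted_iff_nth_Suc
  proof (intro allI impI)
    fix i assume "Suc i < length L"
    then have i: "Suc i < N" "t i < N" "t (Suc i) < N"
      using t_bij by (auto simp: L_def bij_betw_def)
    have "perm_list N s ! t i \<le> perm_list N s ! t (Suc i)"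
      using t i(1) by (simp add: is_sorting_perm_def)
    then show "L ! i \<le> L ! Suc i"
      using i by (simp add: L_def)
  qed
  moreover have "distinct L"
    using st_bij by (simp add: L_def distinct_map bij_betw_def atLeast0LessThan)
  moreover have "set L = set [0..<N]"
    using st_bij by (simp add: L_def bij_betw_def atLeast0LessThan)
  ultimately have "L = [0..<N]"
    by (intro sorted_distinct_set_unique) simp_all
  then have "L ! k = k"
    using k by simp
  then show ?thesis
    using k by (simp add: L_def)
qed

lemma sorting_perm_unique_input:
  assumes "bij_betw s\<^sub>1 {..<N} {..<N}" "bij_betw s\<^sub>2 {..<N} {..<N}"
    and "is_sorting_perm N (perm_list N s\<^sub>1) t" "is_sorting_perm N (perm_list N s\<^sub>2) t"
    and "j < N"
  shows "s\<^sub>1 j = s\<^sub>2 j"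
proof -
  obtain k where "k < N" "t k = j"
    using assms(3,5) unfolding is_sorting_perm_def by (metis bij_betw_iff_bijections lessThan_iff)
  then show ?thesis
    using sorting_perm_of_perm_list[OF assms(1,3)] sorting_perm_of_perm_list[OF assms(2,4)] by metis
qed

definition lift :: "nat \<Rightarrow> nat \<Rightarrow> nat" where
  "lift a v = (if v < a then v else Suc v)"

definition unlift :: "nat \<Rightarrow> nat \<Rightarrow> nat" where
  "unlift j k = (if k < j then k else k - 1)"

lemma lift_neq [simp]: "lift a v \<noteq> a"
  by (simp add: lift_def)

lemma lift_eq_iff [simp]: "lift a u = lift a v \<longleftrightarrow> u = v"
  by (auto simp: lift_def)

lemma lift_less_lift_iff [simp]: "lift a u < lift a v \<longleftrightarrow> u < v"
  by (auto simp: lift_def)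

lemma less_lift_iff [simp]: "a < lift a v \<longleftrightarrow> a \<le> v"
  by (auto simp: lift_def)

lemma lift_less_iff [simp]: "lift a v < a \<longleftrightarrow> v < a"
  by (auto simp: lift_def)

lemma lift_unlift: "k \<noteq> j \<Longrightarrow> lift j (unlift j k) = k"
  by (auto simp: lift_def unlift_def)

lemma unlift_less: "k < N \<Longrightarrow> k \<noteq> j \<Longrightarrow> j < N \<Longrightarrow> unlift j k < N - 1"
  by (auto simp: unlift_def)

text \<open>The input \<open>rank_input N j p a\<close> is the permutation of \<open>0, \<dots>, N - 1\<close> in which item \<open>j\<close> has
  rank \<open>a\<close> and the other items are ordered among themselves by the permutation \<open>p\<close> of
  \<open>0, \<dots>, N - 2\<close>.\<close>

definition rank_perm :: "nat \<Rightarrow> (nat \<Rightarrow> nat) \<Rightarrow> nat \<Rightarrow> nat \<Rightarrow> nat" where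
  "rank_perm j p a k = (if k = j then a else lift a (p (unlift j k)))"

definition rank_input :: "nat \<Rightarrow> nat \<Rightarrow> (nat \<Rightarrow> nat) \<Rightarrow> nat \<Rightarrow> real list" where
  "rank_input N j p a = perm_list N (rank_perm j p a)"

lemma bij_betw_rank_perm:
  assumes j: "j < N" and p: "p permutes {..<N - 1}" and a: "a < N"
  shows "bij_betw (rank_perm j p a) {..<N} {..<N}"
proof -
  have "rank_perm j p a k < N" if "k < N" for k
  proof (cases "k = j")
    case False
    then have "p (unlift j k) < N - 1"
      using permutes_in_image[OF p] unlift_less[OF that False j] by simp
    then show ?thesis
      using False a by (auto simp: rank_perm_def lift_def)
  qed (simp add: rank_perm_def a)
  moreover have "inj_on (rank_perm j p a) {..<N}"
  proof (rule inj_onI)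
    fix k k' assume eq: "rank_perm j p a k = rank_perm j p a k'"
    show "k = k'"
    proof (cases "k = j"; cases "k' = j")
      assume "k \<noteq> j" "k' \<noteq> j"
      then have "p (unlift j k) = p (unlift j k')"
        using eq by (simp add: rank_perm_def)
      then have "unlift j k = unlift j k'"
        using permutes_inj[OF p] by (simp add: inj_eq)
      then show ?thesis
        using lift_unlift \<open>k \<noteq> j\<close> \<open>k' \<noteq> j\<close> by metis
    qed (use eq in \<open>auto simp: rank_perm_def dest: sym\<close>)
  qed
  ultimately show ?thesis
    by (intro bij_betw_imageI endo_inj_surj) auto
qed

lemma rank_input_eq_imp:
  assumes j: "j < N" and p: "p permutes {..<N - 1}" and p': "p' permutes {..<N - 1}"
    and eq: "rank_input N j p a = rank_input N j p' a'"
  shows "p = p' \<and> a = a'"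
proof -
  have same: "rank_perm j p a k = rank_perm j p' a' k" if "k < N" for k
    using arg_cong[OF eq, of "\<lambda>x. x ! k"] that by (simp add: rank_input_def)
  have "a = a'"
    using same[OF j] by (simp add: rank_perm_def)
  moreover have "p m = p' m" for m
  proof (cases "m < N - 1")
    case True
    define k where "k = lift j m"
    have "k < N" "k \<noteq> j" "unlift j k = m"
      using True j by (auto simp: k_def lift_def unlift_def)
    then show ?thesis
      using same[of k] \<open>a = a'\<close> by (simp add: rank_perm_def)
  next
    case False
    then show ?thesis
      using p p' by (simp add: permutes_not_in)
  qed
  ultimately show ?thesis
    by auto
qed

lemma rank_input_in_perm_inputs:
  "j < N \<Longrightarrow> p permutes {..<N - 1} \<Longrightarrow> a < N \<Longrightarrow> rank_input N j p a \<in> perm_inputs N"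
  unfolding rank_input_def by (intro perm_list_in_perm_inputs bij_betw_rank_perm)

lemma sum_rank_inputs_le:
  fixes g :: "real list \<Rightarrow> real"
  assumes j: "j < N" and g: "\<And>x. g x \<ge> 0"
  shows "(\<Sum>p | p permutes {..<N - 1}. \<Sum>a<N. g (rank_input N j p a)) \<le> (\<Sum>x\<in>perm_inputs N. g x)"
proof -
  define S where "S = {p. p permutes {..<N - 1}} \<times> {..<N}"
  have inj: "inj_on (\<lambda>(p, a). rank_input N j p a) S"
    by (rule inj_onI) (use rank_input_eq_imp[OF j] in \<open>auto simp: S_def\<close>)
  have "(\<Sum>p | p permutes {..<N - 1}. \<Sum>a<N. g (rank_input N j p a)) = (\<Sum>(p, a)\<in>S. g (rank_input N j p a))"
    unfolding S_def by (rule sum.cartesian_product)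
  also have "\<dots> = (\<Sum>x\<in>(\<lambda>(p, a). rank_input N j p a) ` S. g x)"
    using sum.reindex[OF inj, of g] by (simp add: case_prod_beta comp_def)
  also have "\<dots> \<le> (\<Sum>x\<in>perm_inputs N. g x)"
    by (intro sum_mono2 finite_perm_inputs) (auto simp: S_def intro: rank_input_in_perm_inputs[OF j] g)
  finally show ?thesis .
qed

section \<open>The adversary bound\<close>

lemma cmp_differ_rank_input:
  assumes j: "j < N" and p: "p permutes {..<N - 1}"
    and differ: "cmp_differ N (rank_input N j p a) (rank_input N j p c) (z, i, i')"
  defines "v \<equiv> p (unlift j (if j = i then i' else i))"
  shows "(j = i \<or> j = i') \<and> (a \<le> v) \<noteq> (c \<le> v)"
proof -
  have i: "i < N" "i' < N"
    using differ by (auto simp: cmp_differ_def cmp_bit_def)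
  then have "(rank_perm j p a i < rank_perm j p a i') \<noteq> (rank_perm j p c i < rank_perm j p c i')"
    using differ by (simp add: cmp_differ_def cmp_bit_def rank_input_def)
  then show ?thesis
    unfolding v_def by (cases "j = i"; cases "j = i'") (auto simp: rank_perm_def)
qed

lemma sum_if_mem_pair_le:
  fixes K :: real and N i i' :: nat
  assumes "K \<ge> 0"
  shows "(\<Sum>j<N. if j = i \<or> j = i' then K else 0) \<le> 2 * K"
proof -
  have "(\<Sum>j<N. if j = i \<or> j = i' then K else 0) \<le> (\<Sum>j<N. (if j = i then K else 0) + (if j = i' then K else 0))"
    using assms by (intro sum_mono) auto
  also have "\<dots> = (if i < N then K else 0) + (if i' < N then K else 0)"
    by (simp add: sum.distrib)
  also have "\<dots> \<le> 2 * K"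
    using assms by auto
  finally show ?thesis .
qed

text \<open>For \<open>a = c\<close> the weight is \<open>1 / 0 = 0\<close>, so pairs of equal inputs do not count.\<close>

definition adv_weight :: "nat \<Rightarrow> nat \<Rightarrow> real" where
  "adv_weight a c = 1 / \<bar>real a - real c\<bar>"

lemma adv_weight_nonneg: "adv_weight a c \<ge> 0"
  by (simp add: adv_weight_def)

lemma sum_adv_weight: "(\<Sum>a<N. \<Sum>c<N. adv_weight a c) = 2 * (real N * harm N - real N)"
proof (induction N)
  case (Suc N)
  have row: "(\<Sum>c<N. adv_weight N c) = harm N"
  proof -
    have "(\<Sum>c<N. adv_weight N c) = (\<Sum>c<N. 1 / real (N - c))"
      by (intro sum.cong) (auto simp: adv_weight_def of_nat_diff)
    also have "\<dots> = (\<Sum>k=1..N. 1 / real k)"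
      by (rule sum.reindex_bij_witness[of _ "\<lambda>k. N - k" "\<lambda>c. N - c"]) auto
    finally show ?thesis
      by (simp add: harm_def inverse_eq_divide)
  qed
  have column: "(\<Sum>a<N. adv_weight a N) = harm N"
    using row by (simp add: adv_weight_def abs_minus_commute)
  have "(\<Sum>a<Suc N. \<Sum>c<Suc N. adv_weight a c)
      = (\<Sum>a<N. \<Sum>c<N. adv_weight a c) + (\<Sum>a<N. adv_weight a N) + (\<Sum>c<N. adv_weight N c) + adv_weight N N"
    by (simp add: sum.distrib)
  also have "\<dots> = 2 * (real N * harm N - real N) + 2 * harm N"
    using Suc row column by (simp add: adv_weight_def)
  also have "\<dots> = 2 * (real (Suc N) * harm (Suc N) - real (Suc N))"
    by (simp add: harm_Suc field_simps)
  finally show ?case .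
qed simp

lemma weighted_differ_le_hilbert:
  fixes r :: "real list \<Rightarrow> real"
  assumes j: "j < N" and p: "p permutes {..<N - 1}" and r: "\<And>x. r x \<ge> 0"
  shows "(\<Sum>a<N. \<Sum>c<N. adv_weight a c *
      (if cmp_differ N (rank_input N j p a) (rank_input N j p c) (z, i, i')
       then r (rank_input N j p a) * r (rank_input N j p c) else 0))
    \<le> (if j = i \<or> j = i' then pi * (\<Sum>a<N. (r (rank_input N j p a))\<^sup>2) else 0)"
proof (cases "j = i \<or> j = i'")
  case True
  define v where "v = p (unlift j (if j = i then i' else i))"
  have "adv_weight a c * (if cmp_differ N (rank_input N j p a) (rank_input N j p c) (z, i, i')
        then r (rank_input N j p a) * r (rank_input N j p c) else 0)
      \<le> (if (a \<le> v) \<noteq> (c \<le> v)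
        then r (rank_input N j p a) * r (rank_input N j p c) / \<bar>real a - real c\<bar> else 0)" for a c
    using cmp_differ_rank_input[OF j p, of a c z i i'] r
    by (auto simp: adv_weight_def v_def)
  then have "(\<Sum>a<N. \<Sum>c<N. adv_weight a c * (if cmp_differ N (rank_input N j p a) (rank_input N j p c) (z, i, i')
        then r (rank_input N j p a) * r (rank_input N j p c) else 0))
      \<le> (\<Sum>a<N. \<Sum>c<N. if (a \<le> v) \<noteq> (c \<le> v)
        then r (rank_input N j p a) * r (rank_input N j p c) / \<bar>real a - real c\<bar> else 0)"
    by (intro sum_mono)
  also have "\<dots> \<le> pi * (\<Sum>a<N. (r (rank_input N j p a))\<^sup>2)"
    by (rule hilbert_inequality_split)
  finally show ?thesis
    using True by simp
next
  case False
  then have "\<not> cmp_differ N (rank_input N j p a) (rank_input N j p c) (z, i, i')" for a c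
    using cmp_differ_rank_input[OF j p] by blast
  then show ?thesis
    using False by simp
qed

lemma weighted_differ_le:
  fixes r :: "real list \<Rightarrow> real"
  assumes r: "\<And>x. r x \<ge> 0"
  shows "(\<Sum>j<N. \<Sum>p | p permutes {..<N - 1}. \<Sum>a<N. \<Sum>c<N. adv_weight a c *
      (if cmp_differ N (rank_input N j p a) (rank_input N j p c) (z, i, i')
       then r (rank_input N j p a) * r (rank_input N j p c) else 0))
    \<le> 2 * pi * (\<Sum>x\<in>perm_inputs N. (r x)\<^sup>2)"
proof -
  define K where "K = pi * (\<Sum>x\<in>perm_inputs N. (r x)\<^sup>2)"
  have K: "K \<ge> 0"
    unfolding K_def by (intro mult_nonneg_nonneg sum_nonneg) auto
  have "(\<Sum>p | p permutes {..<N - 1}. \<Sum>a<N. \<Sum>c<N. adv_weight a c *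
      (if cmp_differ N (rank_input N j p a) (rank_input N j p c) (z, i, i')
       then r (rank_input N j p a) * r (rank_input N j p c) else 0))
    \<le> (if j = i \<or> j = i' then K else 0)" if j: "j < N" for j
  proof -
    have "(\<Sum>p | p permutes {..<N - 1}. \<Sum>a<N. \<Sum>c<N. adv_weight a c *
      (if cmp_differ N (rank_input N j p a) (rank_input N j p c) (z, i, i')
       then r (rank_input N j p a) * r (rank_input N j p c) else 0))
      \<le> (\<Sum>p | p permutes {..<N - 1}. if j = i \<or> j = i' then pi * (\<Sum>a<N. (r (rank_input N j p a))\<^sup>2) else 0)"
      by (intro sum_mono weighted_differ_le_hilbert[OF j _ r]) simp
    also have "\<dots> \<le> (if j = i \<or> j = i' then K else 0)"
      unfolding K_def
      using sum_rank_inputs_le[OF j, of "\<lambda>x. (r x)\<^sup>2"]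
      by (auto simp: sum_distrib_left [symmetric] intro: mult_left_mono)
    finally show ?thesis .
  qed
  then have "(\<Sum>j<N. \<Sum>p | p permutes {..<N - 1}. \<Sum>a<N. \<Sum>c<N. adv_weight a c *
      (if cmp_differ N (rank_input N j p a) (rank_input N j p c) (z, i, i')
       then r (rank_input N j p a) * r (rank_input N j p c) else 0))
    \<le> (\<Sum>j<N. if j = i \<or> j = i' then K else 0)"
    by (intro sum_mono) simp
  also have "\<dots> \<le> 2 * K"
    by (rule sum_if_mem_pair_le[OF K])
  finally show ?thesis
    by (simp add: K_def)
qed

definition progress :: "(state \<Rightarrow> state) \<Rightarrow> nat \<Rightarrow> nat \<Rightarrow> real" where
  "progress U N t = (\<Sum>j<N. \<Sum>p | p permutes {..<N - 1}. \<Sum>a<N. \<Sum>c<N. adv_weight a c *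
     inner_re (final_state U N (rank_input N j p a) t) (final_state U N (rank_input N j p c) t))"

lemma finite_permutes_lessThan: "finite {p. p permutes {..<n :: nat}}"
  by (rule finite_permutations) simp

lemma progress_0:
  assumes U: "is_unitary U" and N: "N \<ge> 1"
  shows "progress U N 0 = 2 * fact N * real N * (harm N - 1)"
proof -
  have "inner_re (final_state U N x 0) (final_state U N y 0) = 1" for x y
    using sqnorm_final_state[OF U, of N x 0] by (simp add: final_state_def inner_re_self)
  then have "progress U N 0 = real N * real (card {p. p permutes {..<N - 1}}) * (\<Sum>a<N. \<Sum>c<N. adv_weight a c)"
    by (simp add: progress_def)
  also have "real (card {p. p permutes {..<N - 1}}) = fact (N - 1)"
    by (simp add: card_permutations)
  also have "real N * fact (N - 1) = fact N"
    using N by (metis fact_reduce not_one_le_zero le_zero_eq neq0_conv of_nat_fact of_nat_mult)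
  finally show ?thesis
    by (simp add: sum_adv_weight algebra_simps)
qed

lemma progress_final_le:
  assumes U: "is_unitary U" and eps: "0 \<le> eps" "eps \<le> 1/2"
    and success: "\<forall>x :: real list. length x = N \<longrightarrow> success_prob U out N x T \<ge> 1 - eps"
  shows "progress U N T \<le> 2 * sqrt (eps * (1 - eps)) * progress U N 0"
proof -
  have pair: "adv_weight a c * inner_re (final_state U N (rank_input N j p a) T) (final_state U N (rank_input N j p c) T)
      \<le> 2 * sqrt (eps * (1 - eps)) * adv_weight a c"
    if j: "j < N" and p: "p permutes {..<N - 1}" and a: "a < N" and c: "c < N" for j p a c
  proof (cases "a = c")
    case True
    then show ?thesis
      by (simp add: adv_weight_def)
  next
    case False
    define x y where "x = rank_input N j p a" and "y = rank_input N j p c"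
    define good where "good z = {b. is_sorting_perm N z (out b)}" for z
    have "good x \<inter> good y = {}"
      using sorting_perm_unique_input[OF bij_betw_rank_perm[OF j p a] bij_betw_rank_perm[OF j p c] _ _ j] False
      by (auto simp: good_def x_def y_def rank_input_def rank_perm_def)
    moreover have "outcome_prob (final_state U N z T) (good z) \<ge> 1 - eps" if "length z = N" for z
      using success that by (simp add: good_def success_prob_def outcome_prob_def)
    ultimately have "inner_re (final_state U N x T) (final_state U N y T) \<le> 2 * sqrt (eps * (1 - eps))"
      using U eps
      by (intro inner_re_le_of_disjoint_outcomes[where A = "good x" and B = "good y"])
         (simp_all add: final_state_l2 sqnorm_final_state x_def y_def rank_input_def)
    then show ?thesis
      using adv_weight_nonneg[of a c] by (simp add: x_def y_def mult_left_mono mult.commute)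
  qed
  have "progress U N T
      \<le> (\<Sum>j<N. \<Sum>p | p permutes {..<N - 1}. \<Sum>a<N. \<Sum>c<N. 2 * sqrt (eps * (1 - eps)) * adv_weight a c)"
    unfolding progress_def by (intro sum_mono pair) auto
  also have "\<dots> = 2 * sqrt (eps * (1 - eps)) * progress U N 0"
  proof -
    have "inner_re (final_state U N x 0) (final_state U N y 0) = 1" for x y
      using sqnorm_final_state[OF U, of N x 0] by (simp add: final_state_def inner_re_self)
    then show ?thesis
      by (simp add: progress_def sum_distrib_left mult.left_commute)
  qed
  finally show ?thesis .
qed

lemma inner_re_final_state_Suc_ge:
  fixes N t :: nat
  assumes U: "is_unitary U"
  defines "\<psi> z \<equiv> final_state U N z t"
  shows "inner_re (\<psi> x) (\<psi> y) - inner_re (final_state U N x (Suc t)) (final_state U N y (Suc t))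
    \<le> 2 * infsum (\<lambda>b. if cmp_differ N x y b then cmod (\<psi> x b) * cmod (\<psi> y b) else 0) UNIV"
proof -
  have \<psi>: "\<psi> z \<in> l2" for z
    using U by (simp add: \<psi>_def final_state_l2)
  have "inner_re (final_state U N x (Suc t)) (final_state U N y (Suc t))
      = inner_re (U (cmp_op N x (\<psi> x))) (U (cmp_op N y (\<psi> y)))"
    by (simp add: final_state_Suc \<psi>_def)
  also have "\<dots> = inner_re (cmp_op N x (\<psi> x)) (cmp_op N y (\<psi> y))"
    by (intro unitary_inner_re U cmp_op_l2 \<psi>)
  finally show ?thesis
    using inner_re_diff_cmp_op_le[OF \<psi>[of x] \<psi>[of y], of N x y] by simp
qed

lemma sum_weighted_overlap_le:
  fixes \<psi> :: "real list \<Rightarrow> state" and N :: nat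
  assumes \<psi>: "\<And>x. \<psi> x \<in> l2" "\<And>x. sqnorm (\<psi> x) = 1"
  defines "overlap x y \<equiv> (\<lambda>b. if cmp_differ N x y b then cmod (\<psi> x b) * cmod (\<psi> y b) else 0)"
  shows "(\<Sum>j<N. \<Sum>p | p permutes {..<N - 1}. \<Sum>a<N. \<Sum>c<N.
      adv_weight a c * infsum (overlap (rank_input N j p a) (rank_input N j p c)) UNIV) \<le> 2 * pi * fact N"
    (is "?total \<le> _")
proof -
  have "overlap x y summable_on UNIV" for x y
    unfolding overlap_def
    by (rule summable_on_comparison_test[OF summable_on_cmod_mult[OF \<psi>(1)[of x] \<psi>(1)[of y]]]) simp_all
  then have "((\<lambda>b. \<Sum>j<N. \<Sum>p | p permutes {..<N - 1}. \<Sum>a<N. \<Sum>c<N.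
      adv_weight a c * overlap (rank_input N j p a) (rank_input N j p c) b) has_sum ?total) UNIV"
    by (intro has_sum_sum has_sum_cmult_right has_sum_infsum finite_lessThan finite_permutes_lessThan)
  moreover have "((\<lambda>b. 2 * pi * (\<Sum>x\<in>perm_inputs N. (cmod (\<psi> x b))\<^sup>2))
      has_sum (2 * pi * (\<Sum>x\<in>perm_inputs N. sqnorm (\<psi> x)))) UNIV"
    by (intro has_sum_cmult_right has_sum_sum has_sum_sqnorm finite_perm_inputs \<psi>)
  ultimately have "?total \<le> 2 * pi * (\<Sum>x\<in>perm_inputs N. sqnorm (\<psi> x))"
  proof (rule has_sum_mono)
    fix b :: basis
    obtain z i i' where b: "b = (z, i, i')"
      by (cases b)
    show "(\<Sum>j<N. \<Sum>p | p permutes {..<N - 1}. \<Sum>a<N. \<Sum>c<N.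
        adv_weight a c * overlap (rank_input N j p a) (rank_input N j p c) b)
        \<le> 2 * pi * (\<Sum>x\<in>perm_inputs N. (cmod (\<psi> x b))\<^sup>2)"
      unfolding overlap_def b by (rule weighted_differ_le) simp
  qed
  also have "\<dots> = 2 * pi * card (perm_inputs N)"
    by (simp add: \<psi>(2))
  also have "\<dots> \<le> 2 * pi * fact N"
    using card_perm_inputs_le[of N] by (intro mult_left_mono) (metis of_nat_fact of_nat_le_iff, simp)
  finally show ?thesis .
qed

lemma progress_step_le:
  assumes U: "is_unitary U"
  shows "progress U N t - progress U N (Suc t) \<le> 4 * pi * fact N"
proof -
  define \<psi> where "\<psi> x = final_state U N x t" for x
  define overlap where
    "overlap x y = (\<lambda>b. if cmp_differ N x y b then cmod (\<psi> x b) * cmod (\<psi> y b) else 0)" for x y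
  have "progress U N t - progress U N (Suc t) = (\<Sum>j<N. \<Sum>p | p permutes {..<N - 1}. \<Sum>a<N. \<Sum>c<N.
      adv_weight a c * (inner_re (\<psi> (rank_input N j p a)) (\<psi> (rank_input N j p c))
        - inner_re (final_state U N (rank_input N j p a) (Suc t)) (final_state U N (rank_input N j p c) (Suc t))))"
    by (simp add: progress_def \<psi>_def sum_subtractf right_diff_distrib)
  also have "\<dots> \<le> (\<Sum>j<N. \<Sum>p | p permutes {..<N - 1}. \<Sum>a<N. \<Sum>c<N.
      adv_weight a c * (2 * infsum (overlap (rank_input N j p a) (rank_input N j p c)) UNIV))"
    unfolding \<psi>_def overlap_def
    by (intro sum_mono mult_left_mono inner_re_final_state_Suc_ge U adv_weight_nonneg)
  also have "\<dots> = 2 * (\<Sum>j<N. \<Sum>p | p permutes {..<N - 1}. \<Sum>a<N. \<Sum>c<N.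
      adv_weight a c * infsum (overlap (rank_input N j p a) (rank_input N j p c)) UNIV)"
    by (simp add: sum_distrib_left mult.left_commute)
  also have "\<dots> \<le> 2 * (2 * pi * fact N)"
    unfolding overlap_def \<psi>_def
    by (intro mult_left_mono sum_weighted_overlap_le final_state_l2 sqnorm_final_state U) simp
  finally show ?thesis
    by simp
qed

lemma progress_decrease_le:
  assumes "is_unitary U"
  shows "progress U N 0 - progress U N t \<le> real t * (4 * pi * fact N)"
proof (induction t)
  case (Suc t)
  then show ?case
    using progress_step_le[OF assms, of N t] by (simp add: algebra_simps)
qed simp

lemma ln_less_harm:
  assumes "N \<ge> 1"
  shows "ln (real N) < harm N"
proof -
  have "ln (real N) < ln (real N + 1)"
    using assms by simp
  then show ?thesis
    using ln_le_harm[of N] by linarith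
qed

theorem theorem2:
  fixes N T :: nat and eps :: real
    and U :: "state \<Rightarrow> state" and out :: "basis \<Rightarrow> nat \<Rightarrow> nat"
  assumes "N \<ge> 1" and "0 \<le> eps" and "eps < 1/2"
    and "is_unitary U"
    and "\<forall>x :: real list. length x = N \<longrightarrow> success_prob U out N x T \<ge> 1 - eps"
  shows "real T \<ge> (1 - 2 * sqrt (eps * (1 - eps))) * (real N / (2 * pi)) * (harm N - 1)
         \<and> (eps = 0 \<longrightarrow> real T > (real N / (2 * pi)) * (ln (real N) - 1))"
proof -
  define S where "S = 2 * sqrt (eps * (1 - eps))"
  define bound where "bound = (1 - S) * (real N / (2 * pi)) * (harm N - 1)"
  have "progress U N T \<le> S * progress U N 0"
    using progress_final_le[OF assms(4,2) _ assms(5)] assms(3) by (simp add: S_def)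
  then have "(1 - S) * progress U N 0 \<le> progress U N 0 - progress U N T"
    by (simp add: left_diff_distrib)
  also have "\<dots> \<le> real T * (4 * pi * fact N)"
    by (rule progress_decrease_le[OF assms(4)])
  also have "(1 - S) * progress U N 0 = (4 * pi * fact N) * bound"
    unfolding progress_0[OF assms(4,1)] bound_def by (simp add: field_simps)
  finally have T: "bound \<le> real T"
    by (simp add: mult.commute [of "real T"])
  moreover have "(real N / (2 * pi)) * (ln (real N) - 1) < (real N / (2 * pi)) * (harm N - 1)"
    using assms(1) ln_less_harm by (intro mult_strict_left_mono) auto
  moreover have "eps = 0 \<Longrightarrow> bound = (real N / (2 * pi)) * (harm N - 1)"
    by (simp add: bound_def S_def)
  ultimately show ?thesis
    unfolding bound_def S_def by auto
qed

end
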